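(* Let $A,B\subseteq\mathbb{R}^n$ be nonempty closed sets and let $\lambda>0$, $\lambda\neq1$. Let $M_{A,B,\lambda}=\{p\in\mathbb{R}^n: p\notin A\cup B,\ d(p,A)=\lambda\, d(p,B)\}$. Then $\mu(M_{A,B,\lambda})=0$.
   Context: $\mu$ is $n$-dimensional Lebesgue measure and $d(q,E)=\min_{e\in E}\|q-e\|$ is the Euclidean distance from a point to a closed set. *)

theory Defs
  imports "HOL-Analysis.Analysis"
begin

end

theory Submission
  imports Defs
begin

(*
  Since M for (A, B, lam) equals M for (B, A, 1/lam), it suffices to treat 0 \<le> lam < 1, and
  then only the closedness of A is needed.  For p \<in> M let a be a nearest point of A.  If q \<in> M
  is close to p, then comparing d(q,A) \<le> |q - a| with d(p,B) \<le> d(q,B) + |q - p| gives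
  (a - p)\<bullet>(q - p) \<le> lam |a - p| |q - p| + |q - p|^2/2: seen from p, the locus lies outside
  a cone of aperture arccos lam around the direction a - p.  Hence on a small piece of M where
  all these directions lie in a narrower cone around a fixed unit vector e, the orthogonal
  projection onto the hyperplane e\<^sup>\<bottom> has a Lipschitz inverse, so the piece is a Lipschitz image
  of a subset of a hyperplane and therefore negligible.  Countably many such pieces, indexed by
  a countable dense set of directions, centres and distance scales, cover M.
*)

definition dist_ratio_locus :: "'a::metric_space set \<Rightarrow> 'a set \<Rightarrow> real \<Rightarrow> 'a set" where
  "dist_ratio_locus A B lam = {p. p \<notin> A \<union> B \<and> infdist p A = lam * infdist p B}"

definition perp_proj :: "'a::real_inner \<Rightarrow> 'a \<Rightarrow> 'a" where
  "perp_proj e x = x - (x \<bullet> e) *\<^sub>R e"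

lemma perp_proj_diff: "perp_proj e q - perp_proj e p = perp_proj e (q - p)"
  by (simp add: perp_proj_def algebra_simps inner_diff_left)

lemma perp_proj_orthogonal:
  assumes "norm e = 1" shows "e \<bullet> perp_proj e x = 0"
  using assms by (simp add: perp_proj_def inner_diff_right dot_square_norm inner_commute)

lemma norm_le_component_plus_perp:
  assumes "norm e = 1" shows "norm h \<le> \<bar>h \<bullet> e\<bar> + norm (perp_proj e h)"
proof -
  have "h = (h \<bullet> e) *\<^sub>R e + perp_proj e h" by (simp add: perp_proj_def)
  then have "norm h \<le> norm ((h \<bullet> e) *\<^sub>R e) + norm (perp_proj e h)" by (metis norm_triangle_ineq)
  then show ?thesis using assms by simp
qed

lemma negligible_if_co_Lipschitz_into_negligible:
  fixes f :: "'a::euclidean_space \<Rightarrow> 'a"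
  assumes neg: "negligible (f ` S)"
    and co_lip: "\<And>p q. p \<in> S \<Longrightarrow> q \<in> S \<Longrightarrow> norm (q - p) \<le> C * norm (f q - f p)"
  shows "negligible S"
proof -
  have inj: "inj_on f S"
    by (rule inj_onI) (use co_lip in fastforce)
  define g where "g = inv_into S f"
  have g_f: "g (f p) = p" if "p \<in> S" for p
    using inj that by (simp add: g_def)
  have "negligible (g ` f ` S)"
  proof (rule negligible_locally_Lipschitz_image[OF order_refl neg])
    fix y assume "y \<in> f ` S"
    then obtain p where p: "p \<in> S" "y = f p" by blast
    show "\<exists>T B. open T \<and> y \<in> T \<and> (\<forall>y'\<in>f ` S \<inter> T. norm (g y' - g y) \<le> B * norm (y' - y))"
      by (rule exI[of _ UNIV], rule exI[of _ C]) (use p co_lip g_f in auto)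
  qed
  moreover have "g ` f ` S = S"
    using g_f by force
  ultimately show ?thesis by simp
qed

lemma nearest_point_inner_bound:
  fixes p q a :: "'a::euclidean_space"
  assumes lam: "0 \<le> lam" "lam \<le> 1" and aA: "a \<in> A" and pa: "dist p a = infdist p A"
    and hp: "infdist p A = lam * infdist p B" and hq: "infdist q A = lam * infdist q B"
    and small: "norm (q - p) \<le> infdist p A"
  shows "(a - p) \<bullet> (q - p) \<le> lam * norm (a - p) * norm (q - p) + (norm (q - p))\<^sup>2 / 2"
proof -
  define h where "h = q - p"
  define z where "z = a - p"
  have nz: "norm z = infdist p A" using pa by (simp add: z_def dist_norm norm_minus_commute)
  have dpq: "dist p q = norm h" by (simp add: h_def dist_norm norm_minus_commute)
  have "norm z = lam * infdist p B" using nz hp by simp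
  also have "\<dots> \<le> lam * (infdist q B + norm h)"
    using mult_left_mono[OF infdist_triangle[of p B q] lam(1)] dpq by simp
  also have "\<dots> \<le> dist q a + lam * norm h"
    using infdist_le[OF aA, of q] hq by (simp add: algebra_simps)
  finally have lower: "norm z - lam * norm h \<le> dist q a" by simp
  have "lam * norm h \<le> norm h" using lam by (simp add: mult_left_le_one_le)
  then have "0 \<le> norm z - lam * norm h" using small nz h_def by simp
  then have "(norm z - lam * norm h)\<^sup>2 \<le> (dist q a)\<^sup>2" using lower by (simp add: power_mono)
  also have "(dist q a)\<^sup>2 = (norm h)\<^sup>2 - 2 * (z \<bullet> h) + (norm z)\<^sup>2"
    by (simp add: dist_norm h_def z_def power2_norm_eq_inner algebra_simps inner_commute)
  finally have "2 * (z \<bullet> h) + lam\<^sup>2 * (norm h)\<^sup>2 \<le> (norm h)\<^sup>2 + 2 * lam * norm z * norm h"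
    by (simp add: power2_diff algebra_simps)
  moreover have "0 \<le> lam\<^sup>2 * (norm h)\<^sup>2" by simp
  ultimately show ?thesis unfolding h_def[symmetric] z_def[symmetric] by linarith
qed

lemma cone_displacement_bound:
  fixes z h e :: "'a::euclidean_space"
  assumes e: "norm e = 1" and z: "0 < norm z" and cone: "(lam + \<eta>) * norm z \<le> z \<bullet> e"
    and zh: "z \<bullet> h \<le> lam * norm z * norm h + (norm h)\<^sup>2 / 2"
    and small: "norm h \<le> \<eta> * norm z" and forward: "0 \<le> h \<bullet> e"
    and \<eta>: "0 < \<eta>" and lam: "0 \<le> lam" "lam + \<eta> / 2 \<le> 1"
  shows "h \<bullet> e \<le> (4 / \<eta>) * norm (perp_proj e h)"
proof -
  define s where "s = h \<bullet> e"
  define w where "w = perp_proj e h"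
  have zh_split: "z \<bullet> h = s * (z \<bullet> e) + z \<bullet> w"
    by (simp add: s_def w_def perp_proj_def inner_diff_right)
  have zw: "- (norm z * norm w) \<le> z \<bullet> w" using Cauchy_Schwarz_ineq2[of z w] by linarith
  have hn: "norm h \<le> s + norm w"
    using norm_le_component_plus_perp[OF e, of h] forward by (simp add: s_def w_def)
  have "(norm h)\<^sup>2 \<le> (s + norm w) * (\<eta> * norm z)"
    unfolding power2_eq_square by (rule mult_mono[OF hn small]) (use forward in \<open>auto simp: s_def\<close>)
  then have quad: "(norm h)\<^sup>2 / 2 \<le> norm z * (\<eta> / 2 * (s + norm w))" by (simp add: algebra_simps)
  have lin: "lam * norm z * norm h \<le> lam * norm z * (s + norm w)"
    using hn lam by (simp add: mult_left_mono)
  have se: "s * ((lam + \<eta>) * norm z) \<le> s * (z \<bullet> e)"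
    using cone forward by (simp add: s_def mult_left_mono)
  have "s * ((lam + \<eta>) * norm z)
        \<le> norm z * norm w + lam * norm z * (s + norm w) + norm z * (\<eta> / 2 * (s + norm w))"
    using zh zh_split zw quad se lin by linarith
  then have "norm z * (s * (lam + \<eta>) - norm w) \<le> norm z * ((lam + \<eta> / 2) * (s + norm w))"
    by (simp add: algebra_simps)
  then have "s * (lam + \<eta>) - norm w \<le> (lam + \<eta> / 2) * (s + norm w)" using z by simp
  then have "s * (\<eta> / 2) \<le> (1 + lam + \<eta> / 2) * norm w" by (simp add: algebra_simps divide_simps)
  also have "\<dots> \<le> 2 * norm w" using lam by (simp add: mult_right_mono)
  finally show ?thesis using \<eta> by (simp add: s_def[symmetric] w_def[symmetric] field_simps)
qed

lemma forward_displacement_bound: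
  fixes p q a e :: "'a::euclidean_space"
  assumes lam: "0 \<le> lam" and \<eta>: "0 < \<eta>" "lam + \<eta> \<le> 1" and e: "norm e = 1"
    and aA: "a \<in> A" and pa: "dist p a = infdist p A"
    and cone: "(lam + \<eta>) * norm (a - p) \<le> (a - p) \<bullet> e"
    and hp: "infdist p A = lam * infdist p B" and hq: "infdist q A = lam * infdist q B"
    and close: "norm (q - p) \<le> \<eta> * infdist p A" and forward: "0 \<le> (q - p) \<bullet> e"
  shows "(q - p) \<bullet> e \<le> (4 / \<eta>) * norm (perp_proj e (q - p))"
proof -
  have nz: "norm (a - p) = infdist p A" using pa by (simp add: dist_norm norm_minus_commute)
  have "\<eta> * infdist p A \<le> infdist p A"
    using \<eta> lam infdist_nonneg[of p A] by (simp add: mult_left_le_one_le)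
  then have "norm (q - p) \<le> infdist p A" using close by linarith
  from nearest_point_inner_bound[OF lam _ aA pa hp hq this]
  have inner: "(a - p) \<bullet> (q - p) \<le> lam * norm (a - p) * norm (q - p) + (norm (q - p))\<^sup>2 / 2"
    using \<eta> lam by simp
  show ?thesis
  proof (cases "norm (a - p) = 0")
    case True
    then have "q = p" using close nz by simp
    then show ?thesis by (simp add: perp_proj_def)
  next
    case False
    then show ?thesis
      by (intro cone_displacement_bound[OF e _ cone inner _ forward \<eta>(1) lam])
         (use close nz \<eta> infdist_nonneg[of p A] in auto)
  qed
qed

(* Applying the forward bound from p or from q, whichever direction moves forward along e,
   bounds the whole step by its orthogonal projection. *)
lemma displacement_bound_by_perp:
  fixes p q a a' e :: "'a::euclidean_space"
  assumes lam: "0 \<le> lam" and \<eta>: "0 < \<eta>" "lam + \<eta> \<le> 1" and e: "norm e = 1"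
    and aA: "a \<in> A" and pa: "dist p a = infdist p A"
    and cone_p: "(lam + \<eta>) * norm (a - p) \<le> (a - p) \<bullet> e"
    and aA': "a' \<in> A" and qa: "dist q a' = infdist q A"
    and cone_q: "(lam + \<eta>) * norm (a' - q) \<le> (a' - q) \<bullet> e"
    and hp: "infdist p A = lam * infdist p B" and hq: "infdist q A = lam * infdist q B"
    and close_p: "norm (q - p) \<le> \<eta> * infdist p A"
    and close_q: "norm (q - p) \<le> \<eta> * infdist q A"
  shows "norm (q - p) \<le> (1 + 4 / \<eta>) * norm (perp_proj e (q - p))"
proof -
  have "\<bar>(q - p) \<bullet> e\<bar> \<le> (4 / \<eta>) * norm (perp_proj e (q - p))"
  proof (cases "0 \<le> (q - p) \<bullet> e")
    case True
    then show ?thesis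
      using forward_displacement_bound[OF lam \<eta> e aA pa cone_p hp hq close_p] by simp
  next
    case False
    have swap: "(p - q) \<bullet> e = - ((q - p) \<bullet> e)" "perp_proj e (p - q) = - perp_proj e (q - p)"
      by (simp_all add: perp_proj_def algebra_simps inner_diff_left)
    have "(p - q) \<bullet> e \<le> (4 / \<eta>) * norm (perp_proj e (p - q))"
      by (rule forward_displacement_bound[OF lam \<eta> e aA' qa cone_q hq hp])
         (use close_q False swap in \<open>simp_all add: norm_minus_commute\<close>)
    then show ?thesis using False swap by simp
  qed
  then show ?thesis
    using norm_le_component_plus_perp[OF e, of "q - p"] by (simp add: algebra_simps)
qed

definition locus_piece ::
    "'a::euclidean_space set \<Rightarrow> 'a set \<Rightarrow> real \<Rightarrow> real \<Rightarrow> 'a \<Rightarrow> real \<Rightarrow> 'a \<Rightarrow> 'a set" where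
  "locus_piece A B lam \<eta> e \<delta> c =
     {p \<in> dist_ratio_locus A B lam.
        (\<exists>a\<in>A. dist p a = infdist p A \<and> (lam + \<eta>) * norm (a - p) \<le> (a - p) \<bullet> e) \<and>
        \<delta> \<le> infdist p A \<and> dist p c < \<eta> * \<delta> / 2}"

(* On a piece, the projection onto e\<^sup>\<bottom> has a Lipschitz inverse, so the piece is negligible. *)
lemma locus_piece_negligible:
  fixes e :: "'a::euclidean_space"
  assumes lam: "0 \<le> lam" and \<eta>: "0 < \<eta>" "lam + \<eta> \<le> 1" and e: "norm e = 1"
  shows "negligible (locus_piece A B lam \<eta> e \<delta> c)"
proof (rule negligible_if_co_Lipschitz_into_negligible)
  have "perp_proj e ` locus_piece A B lam \<eta> e \<delta> c \<subseteq> {x. e \<bullet> x = 0}"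
    using perp_proj_orthogonal[OF e] by auto
  moreover have "negligible {x. e \<bullet> x = 0}"
    using e by (intro negligible_hyperplane) auto
  ultimately show "negligible (perp_proj e ` locus_piece A B lam \<eta> e \<delta> c)"
    by (rule negligible_subset[rotated])
next
  fix p q assume p: "p \<in> locus_piece A B lam \<eta> e \<delta> c" and q: "q \<in> locus_piece A B lam \<eta> e \<delta> c"
  from p obtain a where aA: "a \<in> A" and pa: "dist p a = infdist p A"
    and cone_p: "(lam + \<eta>) * norm (a - p) \<le> (a - p) \<bullet> e"
    and hp: "infdist p A = lam * infdist p B" and dp: "\<delta> \<le> infdist p A"
    and pc: "dist p c < \<eta> * \<delta> / 2"
    by (auto simp: locus_piece_def dist_ratio_locus_def)
  from q obtain a' where aA': "a' \<in> A" and qa: "dist q a' = infdist q A"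
    and cone_q: "(lam + \<eta>) * norm (a' - q) \<le> (a' - q) \<bullet> e"
    and hq: "infdist q A = lam * infdist q B" and dq: "\<delta> \<le> infdist q A"
    and qc: "dist q c < \<eta> * \<delta> / 2"
    by (auto simp: locus_piece_def dist_ratio_locus_def)
  have "norm (q - p) \<le> dist q c + dist p c"
    by (metis dist_commute dist_norm dist_triangle)
  then have "norm (q - p) \<le> \<eta> * \<delta>" using pc qc by linarith
  moreover have "\<eta> * \<delta> \<le> \<eta> * infdist p A" "\<eta> * \<delta> \<le> \<eta> * infdist q A"
    using \<eta> dp dq by simp_all
  ultimately have "norm (q - p) \<le> (1 + 4 / \<eta>) * norm (perp_proj e (q - p))"
    by (intro displacement_bound_by_perp[OF lam \<eta> e aA pa cone_p aA' qa cone_q hp hq]) simp_all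
  then show "norm (q - p) \<le> (1 + 4 / \<eta>) * norm (perp_proj e q - perp_proj e p)"
    by (simp add: perp_proj_diff)
qed

(* For lam < 1, countably many pieces cover the locus: approximate the nearest-point direction
   by a direction from a countable dense set D, and p by a centre from D. *)
lemma dist_ratio_locus_covered:
  fixes A :: "'a::euclidean_space set" and D :: "'a set"
  assumes cA: "closed A" and neA: "A \<noteq> {}" and lam: "lam < 1"
    and dense: "\<And>X. open X \<Longrightarrow> X \<noteq> {} \<Longrightarrow> \<exists>d\<in>D. d \<in> X"
  shows "dist_ratio_locus A B lam \<subseteq>
           (\<Union>(v, k, c) \<in> (D - {0}) \<times> UNIV \<times> D.
              locus_piece A B lam ((1 - lam) / 2) (v /\<^sub>R norm v) (1 / real (Suc k)) c)"
    (is "_ \<subseteq> (\<Union>(v, k, c) \<in> _. ?piece v k c)")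
proof
  define \<eta> where "\<eta> = (1 - lam) / 2"
  have \<eta>: "0 < \<eta>" "lam + \<eta> < 1" using lam by (simp_all add: \<eta>_def field_simps)
  fix p assume pM: "p \<in> dist_ratio_locus A B lam"
  then have "p \<notin> A" by (simp add: dist_ratio_locus_def)
  then have dpos: "0 < infdist p A" by (rule infdist_pos_not_in_closed[OF cA neA])
  obtain a where aA: "a \<in> A" and pa: "infdist p A = dist p a"
    using infdist_attains_inf[OF cA neA] by blast
  define z where "z = a - p"
  have nz: "norm z = infdist p A" using pa by (simp add: z_def dist_norm norm_minus_commute)
  define X where "X = {v. (lam + \<eta>) * norm v * norm z < z \<bullet> v}"
  have "open X" unfolding X_def by (intro open_Collect_less continuous_intros)
  moreover have "z \<in> X"
    using \<eta> dpos nz by (simp add: X_def dot_square_norm power2_eq_square)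
  ultimately obtain v where vD: "v \<in> D" and vX: "v \<in> X" using dense by blast
  have v0: "v \<noteq> 0" using vX by (auto simp: X_def)
  have cone: "(lam + \<eta>) * norm z \<le> z \<bullet> (v /\<^sub>R norm v)"
    using vX v0 by (simp add: X_def field_simps)
  obtain k where k: "inverse (real (Suc k)) < infdist p A"
    using reals_Archimedean[OF dpos] by blast
  have "0 < \<eta> * (1 / real (Suc k)) / 2" using \<eta> by simp
  then have "ball p (\<eta> * (1 / real (Suc k)) / 2) \<noteq> {}" by simp
  then obtain c where cD: "c \<in> D" and pc: "dist p c < \<eta> * (1 / real (Suc k)) / 2"
    using dense[of "ball p (\<eta> * (1 / real (Suc k)) / 2)"] by auto
  have "p \<in> ?piece v k c"
    unfolding locus_piece_def \<eta>_def[symmetric]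
    using pM aA pa cone k pc by (auto simp: z_def inverse_eq_divide)
  then show "p \<in> (\<Union>(v, k, c) \<in> (D - {0}) \<times> UNIV \<times> D. ?piece v k c)"
    using vD v0 cD by blast
qed

lemma dist_ratio_locus_negligible_lt1:
  fixes A B :: "'a::euclidean_space set"
  assumes "closed A" "A \<noteq> {}" "0 \<le> lam" "lam < 1"
  shows "negligible (dist_ratio_locus A B lam)"
proof -
  obtain D :: "'a set" where D: "countable D" "\<And>X. open X \<Longrightarrow> X \<noteq> {} \<Longrightarrow> \<exists>d\<in>D. d \<in> X"
    using countable_dense_setE by blast
  have "negligible (\<Union>(v, k, c) \<in> (D - {0}) \<times> UNIV \<times> D.
          locus_piece A B lam ((1 - lam) / 2) (v /\<^sub>R norm v) (1 / real (Suc k)) c)"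
    using D(1) assms(3,4)
    by (intro negligible_countable_Union) (auto intro!: locus_piece_negligible simp: field_simps)
  then show ?thesis
    by (rule negligible_subset) (rule dist_ratio_locus_covered[OF assms(1,2,4) D(2)])
qed

lemma dist_ratio_locus_swap:
  assumes "lam > 0"
  shows "dist_ratio_locus A B lam = dist_ratio_locus B A (1 / lam)"
  using assms by (auto simp: dist_ratio_locus_def field_simps)

theorem mainTheorem2:
  fixes A B :: "(real ^ 'n) set" and lam :: real
  assumes "closed A" "closed B" "A \<noteq> {}" "B \<noteq> {}"
    and "lam > 0" "lam \<noteq> 1"
  shows "{p. p \<notin> A \<union> B \<and> infdist p A = lam * infdist p B} \<in> null_sets lebesgue"
proof -
  have "negligible (dist_ratio_locus A B lam)"
  proof (cases "lam < 1")
    case True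
    then show ?thesis using dist_ratio_locus_negligible_lt1[OF assms(1,3)] assms(5) by simp
  next
    case False
    then have "1 / lam < 1" using assms(5,6) by simp
    then have "negligible (dist_ratio_locus B A (1 / lam))"
      using dist_ratio_locus_negligible_lt1[OF assms(2,4)] assms(5) by simp
    then show ?thesis by (simp only: dist_ratio_locus_swap[OF assms(5), of A B])
  qed
  then show ?thesis by (simp add: dist_ratio_locus_def negligible_iff_null_sets)
qed

end
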